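(* Let $n\ge1$, $d\ge1$, and let $CC(n,d)=\mathrm{conv}\{\overline{\alpha}_L: L\text{ a corner cut staircase in }d\text{ dimensions of size }n\}$ be the corner cut polytope, where $\overline{\alpha}_L=\sum_{\alpha\in L}\alpha$. Then: (i) for each $i$, the intersection of $CC(n,d)$ with the $i$-th coordinate axis is the point $\binom{n}{2}e_i$ (where $e_i$ is the $i$-th standard basis vector); (ii) if $n=\binom{k+d-1}{d}$ for some integer $k\ge1$, then the corner cut polytope is pointed, in the sense that the staircase of all exponents of total degree at most $k-1$ is a corner cut of size $n$ whose point $\overline{\alpha}_L$ is a vertex of $CC(n,d)$.
   Context: A staircase is a finite set $L\subset\mathbb{Z}^d_{\ge0}$ such that $\alpha\in L$ and $\beta\le\alpha$ componentwise imply $\beta\in L$. A staircase $L$ is a corner cut if there is a $(d-1)$-dimensional affine hyperplane separating $L$ from its complement $\mathbb{Z}^d_{\ge0}\setminus L$. *)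

theory Defs
  imports "HOL-Analysis.Analysis"
begin

text \<open>Exponent vectors in Z^d_{>=0} are functions 'd => nat for a finite index type 'd
  (so d = CARD('d) >= 1).\<close>

definition staircase :: "('d::finite \<Rightarrow> nat) set \<Rightarrow> bool" where
  "staircase L \<longleftrightarrow> finite L \<and> (\<forall>\<alpha>\<in>L. \<forall>\<beta>. (\<forall>i. \<beta> i \<le> \<alpha> i) \<longrightarrow> \<beta> \<in> L)"

definition corner_cut :: "('d::finite \<Rightarrow> nat) set \<Rightarrow> bool" where
  "corner_cut L \<longleftrightarrow> staircase L \<and>
     (\<exists>(w::'d \<Rightarrow> real) c. (\<exists>i. w i \<noteq> 0) \<and>
        (\<forall>\<alpha>\<in>L. (\<Sum>i\<in>UNIV. w i * real (\<alpha> i)) < c) \<and>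
        (\<forall>\<alpha>. \<alpha> \<notin> L \<longrightarrow> (\<Sum>i\<in>UNIV. w i * real (\<alpha> i)) > c))"

definition alpha_bar :: "('d::finite \<Rightarrow> nat) set \<Rightarrow> real ^ 'd" where
  "alpha_bar L = (\<chi> i. real (\<Sum>\<alpha>\<in>L. \<alpha> i))"

definition corner_cut_polytope :: "nat \<Rightarrow> (real ^ 'd::finite) set" where
  "corner_cut_polytope n =
     convex hull {alpha_bar L | L :: ('d \<Rightarrow> nat) set. corner_cut L \<and> card L = n}"

end

theory Submission
  imports Defs
begin

text \<open>Both parts come from the same principle: if a linear functional attains its minimum over
  the generating points of a convex hull at exactly one of them, that point is the unique minimiser
  over the whole hull and hence an extreme point. For (i) the functional is the sum of the
  coordinates other than the i-th; it vanishes only on the staircase \<open>{0, e\<^sub>i, \<dots>, (n-1) e\<^sub>i}\<close>,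
  since a staircase of size n contains no point with i-th coordinate \<open>\<ge> n\<close>. For (ii) the functional
  is the total degree: among all n-element sets of exponents, the sublevel set
  \<open>{\<alpha>. |\<alpha>| \<le> k - 1}\<close> has strictly the smallest degree sum, by exchanging elements.\<close>

lemma convex_insert_halfspace_gt:
  fixes a z :: "'a::real_inner"
  shows "convex (insert z {x. a \<bullet> z < a \<bullet> x})"
proof (unfold convex_def, intro ballI allI impI)
  fix x y and u v :: real
  assume x: "x \<in> insert z {x. a \<bullet> z < a \<bullet> x}" and y: "y \<in> insert z {x. a \<bullet> z < a \<bullet> x}"
    and uv: "0 \<le> u" "0 \<le> v" "u + v = 1"
  have "a \<bullet> (u *\<^sub>R x + v *\<^sub>R y) - a \<bullet> z = u * (a \<bullet> x - a \<bullet> z) + v * (a \<bullet> y - a \<bullet> z)"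
    using uv(3) by (simp add: algebra_simps flip: distrib_right)
  moreover have "u * (a \<bullet> x - a \<bullet> z) \<ge> 0" "v * (a \<bullet> y - a \<bullet> z) \<ge> 0"
    using x y uv by auto
  moreover have "u * (a \<bullet> x - a \<bullet> z) > 0 \<or> v * (a \<bullet> y - a \<bullet> z) > 0 \<or> u *\<^sub>R x + v *\<^sub>R y \<in> {x, y, z}"
  proof (cases "u = 0 \<or> v = 0 \<or> x = z \<and> y = z")
    case True
    then show ?thesis using uv by (auto simp flip: scaleR_add_left)
  next
    case False
    then show ?thesis using x y uv by auto
  qed
  ultimately show "u *\<^sub>R x + v *\<^sub>R y \<in> insert z {x. a \<bullet> z < a \<bullet> x}"
    using x y by auto
qed

lemma convex_hull_subset_insert_halfspace_gt:
  fixes a z :: "'a::real_inner"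
  assumes "\<And>g. g \<in> G \<Longrightarrow> g \<noteq> z \<Longrightarrow> a \<bullet> z < a \<bullet> g"
  shows "convex hull G \<subseteq> insert z {x. a \<bullet> z < a \<bullet> x}"
  by (rule hull_minimal) (use assms convex_insert_halfspace_gt in auto)

lemma extreme_point_of_convex_hull_unique_minimizer:
  fixes a z :: "'a::euclidean_space"
  assumes "z \<in> G" and "\<And>g. g \<in> G \<Longrightarrow> g \<noteq> z \<Longrightarrow> a \<bullet> z < a \<bullet> g"
  shows "z extreme_point_of convex hull G"
proof -
  have sub: "convex hull G \<subseteq> insert z {x. a \<bullet> z < a \<bullet> x}"
    using assms(2) by (rule convex_hull_subset_insert_halfspace_gt)
  show ?thesis
  proof (rule extreme_point_of_Int_supporting_hyperplane_ge)
    show "convex hull G \<inter> {x. a \<bullet> x = a \<bullet> z} = {z}"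
      using sub hull_inc[OF assms(1)] by auto
    show "a \<bullet> z \<le> a \<bullet> x" if "x \<in> convex hull G" for x
      using sub that by fastforce
  qed
qed

lemma corner_cut_finite: "corner_cut L \<Longrightarrow> finite L"
  by (simp add: corner_cut_def staircase_def)

lemma inner_alpha_bar:
  fixes w :: "'d::finite \<Rightarrow> nat"
  assumes "finite L"
  shows "(\<chi> j. real (w j)) \<bullet> alpha_bar L = real (\<Sum>\<alpha>\<in>L. \<Sum>j\<in>UNIV. w j * \<alpha> j)"
  using assms unfolding alpha_bar_def inner_vec_def
  by (simp add: sum.swap[of _ UNIV] sum_distrib_left)

lemma corner_cut_polytope_unique_minimizer:
  fixes w :: "'d::finite \<Rightarrow> nat" and L0 :: "('d \<Rightarrow> nat) set"
  defines "a \<equiv> \<chi> j. real (w j)"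
  assumes L0: "corner_cut L0" "card L0 = n"
    and less: "\<And>L. corner_cut L \<Longrightarrow> card L = n \<Longrightarrow> L \<noteq> L0 \<Longrightarrow>
      (\<Sum>\<alpha>\<in>L0. \<Sum>j\<in>UNIV. w j * \<alpha> j) < (\<Sum>\<alpha>\<in>L. \<Sum>j\<in>UNIV. w j * \<alpha> j)"
  shows "alpha_bar L0 extreme_point_of corner_cut_polytope n"
    and "corner_cut_polytope n \<subseteq> insert (alpha_bar L0) {x. a \<bullet> alpha_bar L0 < a \<bullet> x}"
proof -
  let ?G = "{alpha_bar L | L :: ('d \<Rightarrow> nat) set. corner_cut L \<and> card L = n}"
  have gen: "alpha_bar L0 \<in> ?G" using L0 by blast
  have less_g: "a \<bullet> alpha_bar L0 < a \<bullet> g" if g: "g \<in> ?G" and ne: "g \<noteq> alpha_bar L0" for g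
  proof -
    obtain L where L: "g = alpha_bar L" "corner_cut L" "card L = n" "L \<noteq> L0"
      using g ne by blast
    show ?thesis
      using less[OF L(2-4)] unfolding a_def L(1)
      by (simp only: inner_alpha_bar corner_cut_finite L0(1) L(2) of_nat_less_iff)
  qed
  show "alpha_bar L0 extreme_point_of corner_cut_polytope n"
    unfolding corner_cut_polytope_def
    using gen less_g by (rule extreme_point_of_convex_hull_unique_minimizer)
  show "corner_cut_polytope n \<subseteq> insert (alpha_bar L0) {x. a \<bullet> alpha_bar L0 < a \<bullet> x}"
    unfolding corner_cut_polytope_def
    using less_g by (rule convex_hull_subset_insert_halfspace_gt)
qed

lemma alpha_bar_in_corner_cut_polytope:
  "corner_cut L \<Longrightarrow> alpha_bar L \<in> corner_cut_polytope (card L)"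
  unfolding corner_cut_polytope_def by (rule hull_inc) blast

lemma inj_on_axis_ray: "inj_on (\<lambda>t j. if j = i then t else 0) A"
  by (rule inj_onI) (drule fun_cong[of _ _ i], simp)

lemma staircase_coordinate_less_card:
  assumes "staircase L" and "\<alpha> \<in> L"
  shows "\<alpha> i < card L"
proof -
  let ?e = "\<lambda>t j. if j = i then t else 0"
  have "?e ` {..\<alpha> i} \<subseteq> L"
    using assms unfolding staircase_def by auto
  then have "card (?e ` {..\<alpha> i}) \<le> card L"
    using assms(1) by (intro card_mono) (simp_all add: staircase_def)
  then show ?thesis
    by (simp add: card_image inj_on_axis_ray)
qed

definition axis_staircase :: "'d \<Rightarrow> nat \<Rightarrow> ('d \<Rightarrow> nat) set" where
  "axis_staircase i n = {\<alpha>. (\<forall>j. j \<noteq> i \<longrightarrow> \<alpha> j = 0) \<and> \<alpha> i < n}"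

lemma axis_staircase_eq_image:
  "axis_staircase i n = (\<lambda>t j. if j = i then t else 0) ` {..<n}"
  unfolding axis_staircase_def by (auto simp: image_iff fun_eq_iff)

lemma card_axis_staircase: "card (axis_staircase i n) = n"
  by (simp add: axis_staircase_eq_image card_image inj_on_axis_ray)

lemma corner_cut_axis_staircase:
  fixes i :: "'d::finite"
  shows "corner_cut (axis_staircase i n)"
  unfolding corner_cut_def
proof (intro conjI exI[of _ "\<lambda>j. if j = i then 1 else real n"] exI[of _ "real n - 1/2"])
  show "staircase (axis_staircase i n)"
    unfolding staircase_def
  proof (intro conjI ballI allI impI)
    show "finite (axis_staircase i n)"
      by (simp add: axis_staircase_eq_image)
    fix \<alpha> \<beta> :: "'d \<Rightarrow> nat"
    assume "\<alpha> \<in> axis_staircase i n" and "\<forall>j. \<beta> j \<le> \<alpha> j"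
    then show "\<beta> \<in> axis_staircase i n"
      unfolding axis_staircase_def using le_less_trans by fastforce
  qed
  let ?w = "\<lambda>j. if j = i then 1 else real n"
  show "\<exists>j. ?w j \<noteq> 0" by auto
  show "\<forall>\<alpha>\<in>axis_staircase i n. (\<Sum>j\<in>UNIV. ?w j * real (\<alpha> j)) < real n - 1/2"
  proof
    fix \<alpha> assume \<alpha>: "\<alpha> \<in> axis_staircase i n"
    then have "(\<Sum>j\<in>UNIV. ?w j * real (\<alpha> j)) = (\<Sum>j\<in>UNIV. if j = i then real (\<alpha> i) else 0)"
      by (intro sum.cong) (auto simp: axis_staircase_def)
    then show "(\<Sum>j\<in>UNIV. ?w j * real (\<alpha> j)) < real n - 1/2"
      using \<alpha> by (simp add: axis_staircase_def)
  qed
  show "\<forall>\<alpha>. \<alpha> \<notin> axis_staircase i n \<longrightarrow> (\<Sum>j\<in>UNIV. ?w j * real (\<alpha> j)) > real n - 1/2"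
  proof (intro allI impI)
    fix \<alpha> :: "'d \<Rightarrow> nat"
    assume "\<alpha> \<notin> axis_staircase i n"
    then obtain j where "?w j * real (\<alpha> j) \<ge> real n"
    proof (cases "\<exists>j. j \<noteq> i \<and> \<alpha> j \<noteq> 0")
      case True
      then obtain j where "j \<noteq> i" "\<alpha> j \<ge> 1" by auto
      then show ?thesis using that[of j] by (simp add: mult_le_cancel_left1)
    next
      case False
      then show ?thesis
        using that[of i] \<open>\<alpha> \<notin> axis_staircase i n\<close> by (auto simp: axis_staircase_def)
    qed
    moreover have "?w j * real (\<alpha> j) \<le> (\<Sum>j\<in>UNIV. ?w j * real (\<alpha> j))"
      by (intro member_le_sum) auto
    ultimately show "(\<Sum>j\<in>UNIV. ?w j * real (\<alpha> j)) > real n - 1/2"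
      by linarith
  qed
qed

lemma alpha_bar_axis_staircase:
  "alpha_bar (axis_staircase i n) = real (n choose 2) *\<^sub>R axis i 1"
proof (subst vec_eq_iff, intro allI)
  fix j
  have "(\<Sum>t<n. real t) = real (n choose 2)"
    using Sum_Ico_nat[of 0 n] by (simp add: choose_two atLeast0LessThan flip: of_nat_sum)
  then show "alpha_bar (axis_staircase i n) $ j = (real (n choose 2) *\<^sub>R axis i 1) $ j"
    by (simp add: alpha_bar_def axis_staircase_eq_image sum.reindex inj_on_axis_ray axis_def)
qed

lemma staircase_eq_axis_staircase:
  assumes "staircase L" and "card L = n" and "\<forall>\<alpha>\<in>L. \<forall>j. j \<noteq> i \<longrightarrow> \<alpha> j = 0"
  shows "L = axis_staircase i n"
proof (rule card_subset_eq)
  show "finite (axis_staircase i n)"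
    by (simp add: axis_staircase_eq_image)
  show "L \<subseteq> axis_staircase i n"
    using assms staircase_coordinate_less_card by (fastforce simp: axis_staircase_def)
  show "card L = card (axis_staircase i n)"
    using assms(2) by (simp add: card_axis_staircase)
qed

lemma corner_cut_polytope_Int_axis:
  fixes i :: "'d::finite"
  shows "corner_cut_polytope n \<inter> {x. \<forall>j. j \<noteq> i \<longrightarrow> x $ j = 0}
           = {real (n choose 2) *\<^sub>R axis i 1}"
proof -
  let ?Li = "axis_staircase i n"
  let ?w = "\<lambda>j. if j = i then 0 else 1 :: nat"
  let ?a = "\<chi> j. real (?w j)"
  have "(\<Sum>\<alpha>\<in>?Li. \<Sum>j\<in>UNIV. ?w j * \<alpha> j) < (\<Sum>\<alpha>\<in>L. \<Sum>j\<in>UNIV. ?w j * \<alpha> j)"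
    if L: "corner_cut L" "card L = n" "L \<noteq> ?Li" for L
  proof -
    have "staircase L"
      using L(1) by (simp add: corner_cut_def)
    then obtain \<alpha> j where \<alpha>: "\<alpha> \<in> L" "j \<noteq> i" "\<alpha> j > 0"
      using staircase_eq_axis_staircase L(2,3) by blast
    have "0 < (\<Sum>\<alpha>\<in>L. \<Sum>j\<in>UNIV. ?w j * \<alpha> j)"
      using \<alpha> corner_cut_finite[OF L(1)] by (intro sum_pos2[of _ \<alpha>] sum_pos2[of _ j]) auto
    moreover have "(\<Sum>\<alpha>\<in>?Li. \<Sum>j\<in>UNIV. ?w j * \<alpha> j) = 0"
      by (auto simp: axis_staircase_def intro!: sum.neutral)
    ultimately show ?thesis by simp
  qed
  then have sub: "corner_cut_polytope n \<subseteq> insert (alpha_bar ?Li) {x. ?a \<bullet> alpha_bar ?Li < ?a \<bullet> x}"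
    by (intro corner_cut_polytope_unique_minimizer(2) corner_cut_axis_staircase card_axis_staircase)
  have on_axis: "?a \<bullet> x = 0" if "\<forall>j. j \<noteq> i \<longrightarrow> x $ j = 0" for x
    using that by (auto simp: inner_vec_def intro!: sum.neutral)
  have Li_axis: "\<forall>j. j \<noteq> i \<longrightarrow> alpha_bar ?Li $ j = 0"
    by (simp add: alpha_bar_axis_staircase axis_def)
  have "alpha_bar ?Li \<in> corner_cut_polytope n"
    using alpha_bar_in_corner_cut_polytope[OF corner_cut_axis_staircase] by (simp add: card_axis_staircase)
  moreover have "y = alpha_bar ?Li"
    if "y \<in> corner_cut_polytope n" and y: "\<forall>j. j \<noteq> i \<longrightarrow> y $ j = 0" for y
  proof -
    have "y \<in> insert (alpha_bar ?Li) {x. ?a \<bullet> alpha_bar ?Li < ?a \<bullet> x}"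
      using sub that(1) by (rule subsetD)
    then show ?thesis
      using on_axis[OF y] on_axis[OF Li_axis] by simp
  qed
  ultimately have "corner_cut_polytope n \<inter> {x. \<forall>j. j \<noteq> i \<longrightarrow> x $ j = 0} = {alpha_bar ?Li}"
    using Li_axis by blast
  then show ?thesis
    by (simp only: alpha_bar_axis_staircase)
qed

lemma card_supported_funs_sum_le:
  assumes "finite A"
  shows "card {\<alpha>::'a \<Rightarrow> nat. (\<forall>x. x \<notin> A \<longrightarrow> \<alpha> x = 0) \<and> (\<Sum>x\<in>A. \<alpha> x) \<le> m}
           = (m + card A) choose card A"
  using assms
proof (induction A arbitrary: m rule: finite_induct)
  case empty
  have "{\<alpha>::'a \<Rightarrow> nat. (\<forall>x. \<alpha> x = 0) \<and> 0 \<le> m} = {\<lambda>_. 0}"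
    by auto
  then show ?case by simp
next
  case (insert a A)
  define S where "S m = {\<alpha>::'a \<Rightarrow> nat. (\<forall>x. x \<notin> A \<longrightarrow> \<alpha> x = 0) \<and> (\<Sum>x\<in>A. \<alpha> x) \<le> m}" for m
  have finite_S: "finite (S t)" for t
    by (rule card_ge_0_finite) (simp add: S_def insert.IH)
  let ?T = "{\<alpha>. (\<forall>x. x \<notin> insert a A \<longrightarrow> \<alpha> x = 0) \<and> (\<Sum>x\<in>insert a A. \<alpha> x) \<le> m}"
  have sum_upd: "(\<Sum>x\<in>A. if x = a then t else \<alpha> x) = sum \<alpha> A" for \<alpha> :: "'a \<Rightarrow> nat" and t
    using insert.hyps(2) by (intro sum.cong) auto
  have "bij_betw (\<lambda>\<alpha>. (\<alpha> a, \<alpha>(a := 0))) ?T (SIGMA t:{..m}. S (m - t))"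
  proof (rule bij_betwI[where g = "\<lambda>(t, \<beta>). \<beta>(a := t)"])
    show "(\<lambda>\<alpha>. (\<alpha> a, \<alpha>(a := 0))) \<in> ?T \<rightarrow> (SIGMA t:{..m}. S (m - t))"
      using insert.hyps by (auto simp: S_def sum_upd)
    show "(\<lambda>(t, \<beta>). \<beta>(a := t)) \<in> (SIGMA t:{..m}. S (m - t)) \<rightarrow> ?T"
      using insert.hyps by (auto simp: S_def sum_upd)
  qed (use insert.hyps in \<open>auto simp: S_def\<close>)
  then have "card ?T = (\<Sum>t\<le>m. card (S (m - t)))"
    by (simp add: bij_betw_same_card card_SigmaI finite_S)
  also have "\<dots> = (\<Sum>t\<le>m. (m - t + card A) choose card A)"
    unfolding S_def using insert.IH by simp
  also have "\<dots> = (\<Sum>s\<le>m. (card A + s) choose card A)"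
    by (rule sum.reindex_bij_witness[where i = "\<lambda>s. m - s" and j = "\<lambda>t. m - t"])
      (auto simp: add.commute)
  also have "\<dots> = (card A + m + 1) choose (card A + 1)"
    by (rule choose_rising_sum(1))
  finally show ?case
    using insert.hyps by (simp add: add.commute)
qed

definition degree_staircase :: "nat \<Rightarrow> ('d::finite \<Rightarrow> nat) set" where
  "degree_staircase m = {\<alpha>. (\<Sum>i\<in>UNIV. \<alpha> i) \<le> m}"

lemma card_degree_staircase:
  "card (degree_staircase m :: ('d::finite \<Rightarrow> nat) set) = (m + CARD('d)) choose CARD('d)"
  using card_supported_funs_sum_le[of "UNIV :: 'd set" m] by (simp add: degree_staircase_def)

lemma finite_degree_staircase: "finite (degree_staircase m)"
  by (rule card_ge_0_finite) (simp add: card_degree_staircase)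

lemma corner_cut_degree_staircase: "corner_cut (degree_staircase m :: ('d::finite \<Rightarrow> nat) set)"
  unfolding corner_cut_def
proof (intro conjI exI[of _ "\<lambda>_. 1"] exI[of _ "real m + 1/2"])
  show "staircase (degree_staircase m :: ('d \<Rightarrow> nat) set)"
    unfolding staircase_def
  proof (intro conjI ballI allI impI finite_degree_staircase)
    fix \<alpha> \<beta> :: "'d \<Rightarrow> nat"
    assume "\<alpha> \<in> degree_staircase m" and "\<forall>i. \<beta> i \<le> \<alpha> i"
    moreover have "(\<Sum>i\<in>UNIV. \<beta> i) \<le> (\<Sum>i\<in>UNIV. \<alpha> i)"
      using \<open>\<forall>i. \<beta> i \<le> \<alpha> i\<close> by (intro sum_mono) auto
    ultimately show "\<beta> \<in> degree_staircase m"
      by (simp add: degree_staircase_def)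
  qed
  show "\<exists>i::'d. (1::real) \<noteq> 0" by simp
  show "\<forall>\<alpha>\<in>degree_staircase m. (\<Sum>i\<in>UNIV. 1 * real (\<alpha> i)) < real m + 1/2"
    by (auto simp: degree_staircase_def simp flip: of_nat_sum)
  show "\<forall>\<alpha>. \<alpha> \<notin> degree_staircase m \<longrightarrow> (\<Sum>i\<in>UNIV. 1 * real (\<alpha> i)) > real m + 1/2"
    by (auto simp: degree_staircase_def simp flip: of_nat_sum)
qed

lemma sum_sublevel_set_less:
  fixes f :: "'a \<Rightarrow> nat"
  assumes "finite L" "finite D" "card L = card D" "L \<noteq> D"
    and below: "\<And>x. x \<in> D \<Longrightarrow> f x \<le> m" and above: "\<And>y. y \<notin> D \<Longrightarrow> m < f y"
  shows "sum f D < sum f L"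
proof -
  have card_eq: "card (D - L) = card (L - D)"
    using assms(1-3) by (simp add: card_Diff_subset_Int Int_commute)
  have "L - D \<noteq> {}"
    using assms(1-4) card_subset_eq[of D L] by blast
  then have "card (L - D) > 0"
    using assms(1) by auto
  have "sum f (D - L) \<le> m * card (D - L)"
    using sum_bounded_above[of "D - L" f m] below by (simp add: mult.commute)
  also have "\<dots> < Suc m * card (L - D)"
    using card_eq \<open>card (L - D) > 0\<close> by simp
  also have "\<dots> \<le> sum f (L - D)"
    using sum_bounded_below[of "L - D" "Suc m" f] above by (simp add: mult.commute Suc_le_eq)
  finally have "sum f (D - L) < sum f (L - D)" .
  then show ?thesis
    using sum.Int_Diff[OF assms(1), of f D] sum.Int_Diff[OF assms(2), of f L]
    by (simp add: Int_commute)
qed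

lemma extreme_point_alpha_bar_degree_staircase:
  fixes m :: nat
  defines "D \<equiv> degree_staircase m :: ('d::finite \<Rightarrow> nat) set"
  shows "alpha_bar D extreme_point_of corner_cut_polytope (card D)"
proof (rule corner_cut_polytope_unique_minimizer(1)[where w = "\<lambda>_. 1"])
  show "corner_cut D"
    unfolding D_def by (rule corner_cut_degree_staircase)
  fix L :: "('d \<Rightarrow> nat) set"
  assume L: "corner_cut L" "card L = card D" "L \<noteq> D"
  have "sum (\<lambda>\<alpha>. \<Sum>j\<in>UNIV. \<alpha> j) D < sum (\<lambda>\<alpha>. \<Sum>j\<in>UNIV. \<alpha> j) L"
    by (rule sum_sublevel_set_less[where m = m])
      (use L finite_degree_staircase[of m] in \<open>auto simp: D_def corner_cut_finite degree_staircase_def\<close>)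
  then show "(\<Sum>\<alpha>\<in>D. \<Sum>j\<in>UNIV. 1 * \<alpha> j) < (\<Sum>\<alpha>\<in>L. \<Sum>j\<in>UNIV. 1 * \<alpha> j)"
    by simp
qed simp

theorem lemma2:
  fixes n :: nat
  assumes "n \<ge> 1"
  shows "(\<forall>i::'d::finite.
            corner_cut_polytope n \<inter> {x :: real ^ 'd. \<forall>j. j \<noteq> i \<longrightarrow> x $ j = 0}
              = {real (n choose 2) *\<^sub>R axis i 1})
       \<and> (\<forall>k::nat. k \<ge> 1 \<and> n = (k + CARD('d) - 1) choose CARD('d) \<longrightarrow>
            (let L0 = {\<alpha> :: 'd \<Rightarrow> nat. (\<Sum>i\<in>UNIV. \<alpha> i) \<le> k - 1}
             in corner_cut L0 \<and> card L0 = n \<and>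
                alpha_bar L0 extreme_point_of (corner_cut_polytope n :: (real ^ 'd) set)))"
proof (intro conjI allI impI)
  show "corner_cut_polytope n \<inter> {x. \<forall>j. j \<noteq> i \<longrightarrow> x $ j = 0} = {real (n choose 2) *\<^sub>R axis i 1}"
    for i :: 'd
    by (rule corner_cut_polytope_Int_axis)
next
  fix k :: nat
  assume k: "k \<ge> 1 \<and> n = (k + CARD('d) - 1) choose CARD('d)"
  then have "card (degree_staircase (k - 1) :: ('d \<Rightarrow> nat) set) = n"
    by (simp add: card_degree_staircase)
  moreover have "corner_cut (degree_staircase (k - 1) :: ('d \<Rightarrow> nat) set)"
    by (rule corner_cut_degree_staircase)
  moreover note extreme_point_alpha_bar_degree_staircase[of "k - 1", where 'd = 'd]
  ultimately show "let L0 = {\<alpha> :: 'd \<Rightarrow> nat. (\<Sum>i\<in>UNIV. \<alpha> i) \<le> k - 1}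
        in corner_cut L0 \<and> card L0 = n \<and> alpha_bar L0 extreme_point_of corner_cut_polytope n"
    by (simp add: Let_def degree_staircase_def)
qed

end
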